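(* Let $P$ be a poset. If $P$ is well-quasi-ordered and the set $\mathcal{J}^{\neg\downarrow}(P)$ of non-principal ideals of $P$ is a chain under inclusion, then $P$ is better-quasi-ordered.
   Context: An ideal of $P$ is a nonempty initial segment of $P$ which is up-directed; it is principal if it has a largest element. A quasi-ordered set is well-quasi-ordered (wqo) if it is well-founded and has no infinite antichain. Barriers and bqo: finite subsets of $\mathbb{N}$ are identified with their increasing enumerations. For finite $s,t\subseteq\mathbb{N}$ write $s\triangleleft t$ if there is a finite $r\subseteq\mathbb{N}$ such that $s$ is a proper initial segment of $r$ and $t$ is $r$ with its least element removed. A barrier is an infinite set $B$ of finite subsets of $\mathbb{N}$, no member of which is a proper subset of another, such that every infinite $X\subseteq\bigcup B$ has a nonempty initial segment belonging to $B$. A barrier is well-ordered by the lexicographic order; its order type is the type of this well-order. A map $f$ from a barrier $B$ into a quasi-ordered set $Q$ is good if there exist $s,t\in B$ with $s\triangleleft t$ and $f(s)\leq f(t)$, and bad otherwise. For a countable ordinal $\alpha$, $Q$ is $\alpha$-bqo if every map from a barrier of order type at most $\alpha$ into $Q$ is good; $Q$ is better-quasi-ordered (bqo) if it is $\alpha$-bqo for every countable ordinal $\alpha$. *)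

theory Defs
  imports Main
begin

definition ideal_of :: "'a::order set \<Rightarrow> 'a set \<Rightarrow> bool" where
  "ideal_of P I \<longleftrightarrow> I \<subseteq> P \<and> I \<noteq> {} \<and>
     (\<forall>x\<in>I. \<forall>y\<in>P. y \<le> x \<longrightarrow> y \<in> I) \<and>
     (\<forall>x\<in>I. \<forall>y\<in>I. \<exists>z\<in>I. x \<le> z \<and> y \<le> z)"

definition principal_ideal :: "'a::order set \<Rightarrow> bool" where
  "principal_ideal I \<longleftrightarrow> (\<exists>m\<in>I. \<forall>x\<in>I. x \<le> m)"

definition nonprincipal_ideals :: "'a::order set \<Rightarrow> 'a set set" where
  "nonprincipal_ideals P = {I. ideal_of P I \<and> \<not> principal_ideal I}"

definition is_chain_incl :: "'b set set \<Rightarrow> bool" where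
  "is_chain_incl S \<longleftrightarrow> (\<forall>I\<in>S. \<forall>J\<in>S. I \<subseteq> J \<or> J \<subseteq> I)"

definition wqo_on :: "'a::order set \<Rightarrow> bool" where
  "wqo_on P \<longleftrightarrow> wf {(x, y). x \<in> P \<and> y \<in> P \<and> x < y} \<and>
     (\<forall>A \<subseteq> P. (\<forall>x\<in>A. \<forall>y\<in>A. x \<noteq> y \<longrightarrow> \<not> x \<le> y) \<longrightarrow> finite A)"

definition init_seg :: "nat set \<Rightarrow> nat set \<Rightarrow> bool" where
  "init_seg s X \<longleftrightarrow> s \<subseteq> X \<and> (\<forall>x\<in>s. \<forall>y\<in>X. y < x \<longrightarrow> y \<in> s)"

definition shift_rel :: "nat set \<Rightarrow> nat set \<Rightarrow> bool" (infix "\<lhd>" 50) where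
  "s \<lhd> t \<longleftrightarrow> (\<exists>r. finite r \<and> init_seg s r \<and> s \<noteq> r \<and> t = r - {Min r})"

definition barrier :: "nat set set \<Rightarrow> bool" where
  "barrier B \<longleftrightarrow> infinite B \<and> (\<forall>s\<in>B. finite s) \<and>
     (\<forall>s\<in>B. \<forall>t\<in>B. \<not> s \<subset> t) \<and>
     (\<forall>X. X \<subseteq> \<Union>B \<and> infinite X \<longrightarrow>
        (\<exists>s\<in>B. s \<noteq> {} \<and> finite s \<and> init_seg s X))"

definition good_map :: "nat set set \<Rightarrow> (nat set \<Rightarrow> 'a::order) \<Rightarrow> bool" where
  "good_map B f \<longleftrightarrow> (\<exists>s\<in>B. \<exists>t\<in>B. s \<lhd> t \<and> f s \<le> f t)"

definition bqo_on :: "'a::order set \<Rightarrow> bool" where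
  "bqo_on P \<longleftrightarrow> (\<forall>B f. barrier B \<and> f ` B \<subseteq> P \<longrightarrow> good_map B f)"

end

theory Submission
  imports Defs "HOL-Library.Ramsey"
begin

text \<open>
  Call h bad above a prefix u of the barrier B along an infinite set N if, for every
  infinite X \<subseteq> N, the value of h at the element of B that is an initial segment of
  u \<union> X is not below its value at the element of B that is an initial segment of
  u \<union> shift X. A bad map on B is bad above the empty prefix, so it suffices to show, by
  well-founded induction on prefixes ordered by proper extension, that no map is bad above
  any prefix.

  If u \<notin> B, each X \<subseteq> N has a head s with u \<union> s \<in> B, and the values of h at the
  elements of B that X reaches after shifting generate an ideal of P that misses h (u \<union> s).
  A Nash-Williams homogenisation, which uses that P is wqo, makes these values increase, and
  another application of Nash-Williams' theorem shrinks N so that the ideals generated at the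
  heads are either all non-principal or all principal. In the first case the ideals along
  X, shift X, shift (shift X), ... form a chain by hypothesis, and this chain strictly
  decreases, which is impossible in a wqo. In the second case the value at the shift only
  depends on the head, so h transfers to a map that is bad above the longer prefix obtained
  by adding the least element of N to u.
\<close>

section \<open>Well-quasi-orders\<close>

lemma wqo_on_no_descending_seq:
  assumes "wqo_on P" and "\<And>k. x k \<in> P"
  shows "\<not> (\<forall>k. x (Suc k) < x k)"
  using assms unfolding wqo_on_def wf_iff_no_infinite_down_chain by blast

lemma wqo_on_good_seq:
  fixes x :: "nat \<Rightarrow> 'a::order"
  assumes wqo: "wqo_on P" and xP: "\<And>i. x i \<in> P"
  shows "\<exists>i j. i < j \<and> x i \<le> x j"
proof (rule ccontr)
  assume bad: "\<nexists>i j. i < j \<and> x i \<le> x j"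
  define c where "c S = (if x (Max S) < x (Min S) then 0 else 1::nat)" for S :: "nat set"
  have c_pair: "c {i, j} = (if x j < x i then 0 else 1)" if "i < j" for i j
    using that by (simp add: c_def max_def min_def)
  have "\<forall>i\<in>UNIV. \<forall>j\<in>UNIV. i \<noteq> j \<longrightarrow> c {i, j} < 2" by (simp add: c_def)
  then obtain Y t where Y: "infinite Y" and "t < 2"
    and hom: "\<forall>i\<in>Y. \<forall>j\<in>Y. i \<noteq> j \<longrightarrow> c {i, j} = t"
    using Ramsey2[of "UNIV :: nat set" c 2] by auto
  then consider "t = 0" | "t = 1" by linarith
  then show False
  proof cases
    case 1
    define e where "e = enumerate Y"
    have "e k < e (Suc k)" "e k \<in> Y" "e (Suc k) \<in> Y" for k
      using Y by (simp_all add: e_def enumerate_step enumerate_in_set)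
    then have "x (e (Suc k)) < x (e k)" for k
      using hom c_pair 1 by (metis less_not_refl zero_neq_one)
    then show False
      using wqo_on_no_descending_seq[OF wqo, of "x \<circ> e"] xP by auto
  next
    case 2
    have antichain: "\<not> x i \<le> x j" if "i \<in> Y" "j \<in> Y" "i \<noteq> j" for i j
    proof (cases "i < j")
      case False
      then have "j < i" using that(3) by simp
      then have "\<not> x i < x j" using that hom c_pair 2 by (metis zero_neq_one)
      with bad \<open>j < i\<close> that(3) show ?thesis by (metis order.order_iff_strict)
    qed (use bad in blast)
    then have "inj_on x Y" by (metis inj_onI order_refl)
    moreover have "finite (x ` Y)"
    proof -
      have "x ` Y \<subseteq> P" "\<forall>a\<in>x ` Y. \<forall>b\<in>x ` Y. a \<noteq> b \<longrightarrow> \<not> a \<le> b"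
        using xP antichain by blast+
      with wqo show ?thesis
        unfolding wqo_on_def by blast
    qed
    ultimately show False using Y finite_imageD by blast
  qed
qed

lemma wqo_on_no_strictly_decreasing_ideals:
  assumes wqo: "wqo_on P" and ideal: "\<And>k. ideal_of P (I k)" and dec: "\<And>k. I (Suc k) \<subset> I k"
  shows False
proof -
  have "\<forall>k. \<exists>x. x \<in> I k - I (Suc k)"
    using dec by blast
  then obtain e where e: "\<And>k. e k \<in> I k - I (Suc k)"
    by metis
  have anti: "I j \<subseteq> I i" if "i \<le> j" for i j
    using lift_Suc_antimono_le[of I, OF _ that] dec by blast
  have "e k \<in> P" for k
    using e ideal unfolding ideal_of_def by blast
  then obtain i j where "i < j" "e i \<le> e j"
    using wqo_on_good_seq[OF wqo, of e] by blast
  moreover from this have "e j \<in> I (Suc i)"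
    using e anti[of "Suc i" j] by auto
  ultimately have "e i \<in> I (Suc i)"
    using ideal[of "Suc i"] \<open>e i \<in> P\<close> unfolding ideal_of_def by blast
  with e show False
    by blast
qed

section \<open>Initial segments and shifts of sets of naturals\<close>

definition above :: "nat set \<Rightarrow> nat \<Rightarrow> bool" where
  "above s n \<longleftrightarrow> (\<forall>x\<in>s. x < n)"

definition tail :: "nat set \<Rightarrow> nat set \<Rightarrow> nat set" where
  "tail s M = {n \<in> M. above s n}"

definition shift :: "nat set \<Rightarrow> nat set" where
  "shift X = X - {LEAST n. n \<in> X}"

lemma above_Un [simp]: "above (s \<union> t) n \<longleftrightarrow> above s n \<and> above t n"
  by (auto simp: above_def)

lemma above_insert [simp]: "above (insert m s) n \<longleftrightarrow> m < n \<and> above s n"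
  by (auto simp: above_def)

lemma above_empty [simp]: "above {} n"
  by (simp add: above_def)

lemma above_disjoint: "\<forall>y\<in>w. above s y \<Longrightarrow> s \<inter> w = {}"
  by (auto simp: above_def)

lemma tail_subset: "tail s M \<subseteq> M"
  by (auto simp: tail_def)

lemma tail_empty [simp]: "tail {} M = M"
  by (simp add: tail_def)

lemma tail_mono: "M \<subseteq> M' \<Longrightarrow> tail s M \<subseteq> tail s M'"
  by (auto simp: tail_def)

lemma tail_tail: "tail s (tail t M) = tail (s \<union> t) M"
  by (auto simp: tail_def)

lemma infinite_tail:
  assumes "infinite M" "finite s"
  shows "infinite (tail s M)"
proof -
  have "M - {..Max s} \<subseteq> tail s M"
    using Max_ge[OF assms(2)] by (fastforce simp: tail_def above_def)
  moreover have "infinite (M - {..Max s})"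
    using assms(1) by simp
  ultimately show ?thesis
    using infinite_super by blast
qed

lemma init_seg_subset: "init_seg s X \<Longrightarrow> s \<subseteq> X"
  by (simp add: init_seg_def)

lemma init_seg_trans: "init_seg a b \<Longrightarrow> init_seg b X \<Longrightarrow> init_seg a X"
  unfolding init_seg_def by blast

lemma init_seg_comparable: "init_seg a X \<Longrightarrow> init_seg b X \<Longrightarrow> a \<subseteq> b \<or> b \<subseteq> a"
  unfolding init_seg_def by (metis linorder_neqE_nat subsetD subsetI)

lemma init_seg_between: "init_seg a X \<Longrightarrow> a \<subseteq> b \<Longrightarrow> b \<subseteq> X \<Longrightarrow> init_seg a b"
  unfolding init_seg_def by blast

lemma init_seg_Un: "\<forall>y\<in>Y. above s y \<Longrightarrow> init_seg s (s \<union> Y)"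
  unfolding init_seg_def above_def by force

lemma init_seg_Un_mono:
  "init_seg w Y \<Longrightarrow> \<forall>y\<in>Y. above a y \<Longrightarrow> init_seg (a \<union> w) (a \<union> Y)"
  unfolding init_seg_def above_def by (auto dest: less_asym)

lemma init_seg_Un_cancel:
  assumes "init_seg (a \<union> b) (a \<union> Y)" "\<forall>y\<in>b. above a y" "\<forall>y\<in>Y. above a y"
  shows "init_seg b Y"
  using assms unfolding init_seg_def above_def by blast

lemma init_seg_tail: "init_seg s X \<Longrightarrow> X = s \<union> tail s X"
  unfolding init_seg_def tail_def above_def by (auto simp: not_less order.order_iff_strict)

lemma init_seg_Least: "init_seg s X \<Longrightarrow> s \<noteq> {} \<Longrightarrow> (LEAST n. n \<in> X) \<in> s"
  unfolding init_seg_def by (metis LeastI Least_le ex_in_conv le_neq_implies_less subsetD)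

lemma Min_init_seg:
  "init_seg s X \<Longrightarrow> s \<noteq> {} \<Longrightarrow> finite s \<Longrightarrow> Min s = (LEAST n. n \<in> X)"
  by (intro Min_eqI) (auto intro: Least_le init_seg_Least dest: init_seg_subset)

lemma shift_init_seg:
  assumes "init_seg s X" "s \<noteq> {}" "finite s"
  shows "shift X = (s - {Min s}) \<union> tail s X"
proof -
  have "Min s \<notin> tail s X"
    using Min_in[OF assms(3,2)] by (auto simp: tail_def above_def)
  then show ?thesis
    using init_seg_tail[OF assms(1)] Min_init_seg[OF assms] by (auto simp: shift_def)
qed

lemma shift_subset: "shift X \<subseteq> X"
  by (auto simp: shift_def)

lemma infinite_shift: "infinite X \<Longrightarrow> infinite (shift X)"
  by (simp add: shift_def)

lemma shift_insert: "\<forall>z\<in>Z. m < z \<Longrightarrow> shift (insert m Z) = Z"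
proof -
  assume "\<forall>z\<in>Z. m < z"
  moreover from this have "(LEAST n. n \<in> insert m Z) = m"
    by (intro Least_equality) (auto simp: less_imp_le)
  ultimately show ?thesis by (auto simp: shift_def)
qed

lemma Least_less_shift: "y \<in> shift X \<Longrightarrow> (LEAST n. n \<in> X) < y"
  unfolding shift_def by (metis DiffE Least_le le_neq_implies_less singletonI)

lemma init_seg_insert_Least:
  assumes "X \<noteq> {}" "init_seg t (shift X)"
  shows "init_seg (insert (LEAST n. n \<in> X) t) X"
proof -
  have "insert (LEAST n. n \<in> X) (shift X) = X"
    using assms(1) unfolding shift_def by (metis LeastI ex_in_conv insert_Diff)
  moreover have "\<forall>y\<in>shift X. above {LEAST n. n \<in> X} y"
    using Least_less_shift by (simp add: above_def)
  ultimately show ?thesis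
    using init_seg_Un_mono[OF assms(2), of "{LEAST n. n \<in> X}"] by simp
qed

section \<open>Nash-Williams' theorem\<close>

lemma fusion_finite:
  assumes hered: "\<And>s M M'. M \<subseteq> N \<Longrightarrow> Q s M \<Longrightarrow> M' \<subseteq> M \<Longrightarrow> infinite M' \<Longrightarrow> Q s M'"
    and ex: "\<And>s M. finite s \<Longrightarrow> M \<subseteq> N \<Longrightarrow> infinite M \<Longrightarrow> \<exists>M'\<subseteq>M. infinite M' \<and> Q s M'"
  shows "finite S \<Longrightarrow> \<forall>s\<in>S. finite s \<Longrightarrow> M \<subseteq> N \<Longrightarrow> infinite M \<Longrightarrow>
    \<exists>M'\<subseteq>M. infinite M' \<and> (\<forall>s\<in>S. Q s M')"
proof (induction S arbitrary: M rule: finite_induct)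
  case (insert s S)
  then obtain M1 where M1: "M1 \<subseteq> M" "infinite M1" "\<forall>s\<in>S. Q s M1"
    by (metis insert_iff)
  with insert.prems obtain M2 where M2: "M2 \<subseteq> M1" "infinite M2" "Q s M2"
    using ex[of s M1] by auto
  have "\<forall>s'\<in>S. Q s' M2"
    using M1 M2 insert.prems(2) hered[of M1] by blast
  with M1 M2 show ?case by blast
qed auto

lemma shrinking_seq_least:
  fixes Ms :: "nat \<Rightarrow> nat set"
  assumes inf: "\<And>k. infinite (Ms k)" and shrink: "\<And>k. Ms (Suc k) \<subseteq> Ms k - {LEAST n. n \<in> Ms k}"
  shows "(LEAST n. n \<in> Ms k) \<in> Ms k" and "k \<le> j \<Longrightarrow> Ms j \<subseteq> Ms k"
    and "strict_mono (\<lambda>k. LEAST n. n \<in> Ms k)"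
proof -
  show least_in: "(LEAST n. n \<in> Ms k) \<in> Ms k" for k
    using inf[of k] by (metis LeastI finite.emptyI ex_in_conv)
  show anti: "Ms j \<subseteq> Ms k" if "k \<le> j" for j k
    using lift_Suc_antimono_le[of Ms, OF _ that] shrink by blast
  have "(LEAST n. n \<in> Ms k) < (LEAST n. n \<in> Ms (Suc k))" for k
    using least_in[of "Suc k"] shrink[of k] Least_le[of "\<lambda>n. n \<in> Ms k"] by fastforce
  then show "strict_mono (\<lambda>k. LEAST n. n \<in> Ms k)"
    using strict_mono_Suc_iff by blast
qed

lemma shrinking_seq_diagonal:
  fixes Ms :: "nat \<Rightarrow> nat set"
  assumes inf: "\<And>k. infinite (Ms k)" and shrink: "\<And>k. Ms (Suc k) \<subseteq> Ms k - {LEAST n. n \<in> Ms k}"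
    and s: "finite s" "s \<subseteq> range (\<lambda>k. LEAST n. n \<in> Ms (Suc k))"
  shows "\<exists>k. s \<subseteq> {..LEAST n. n \<in> Ms k} \<and> tail s (range (\<lambda>k. LEAST n. n \<in> Ms (Suc k))) \<subseteq> Ms (Suc k)"
proof -
  define n where "n k = (LEAST n. n \<in> Ms k)" for k
  note seq = shrinking_seq_least[of Ms, OF inf shrink, folded n_def]
  define D where "D = range (\<lambda>k. n (Suc k))"
  have "\<exists>k. s \<subseteq> {..n k} \<and> tail s D \<subseteq> Ms (Suc k)"
  proof (cases "s = {}")
    case True
    have "D \<subseteq> Ms (Suc 0)"
    proof (unfold D_def, rule image_subsetI)
      show "n (Suc k) \<in> Ms (Suc 0)" for k
        using seq(1)[of "Suc k"] seq(2)[of "Suc 0" "Suc k"] by blast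
    qed
    with True show ?thesis
      by auto
  next
    case False
    then obtain j where j: "Max s = n (Suc j)"
      using Max_in[OF s(1) False] s(2) unfolding D_def n_def by blast
    have "tail s D \<subseteq> Ms (Suc (Suc j))"
    proof
      fix y assume "y \<in> tail s D"
      then have "y \<in> D" "Max s < y"
        using Max_in[OF s(1) False] by (auto simp: tail_def above_def)
      then obtain i where i: "y = n (Suc i)" "n (Suc j) < n (Suc i)"
        using j unfolding D_def by auto
      then have "Suc (Suc j) \<le> Suc i"
        using strict_mono_less[OF seq(3)] by (metis Suc_leI)
      then show "y \<in> Ms (Suc (Suc j))"
        using seq(1)[of "Suc i"] seq(2) i(1) by blast
    qed
    moreover have "s \<subseteq> {..n (Suc j)}"
      using Max_ge[OF s(1)] j by auto
    ultimately show ?thesis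
      by blast
  qed
  then show ?thesis
    by (simp add: n_def D_def)
qed

lemma fusion_sequence:
  fixes N :: "nat set"
  assumes "infinite N"
    and hered: "\<And>s M M'. M \<subseteq> N \<Longrightarrow> Q s M \<Longrightarrow> M' \<subseteq> M \<Longrightarrow> infinite M' \<Longrightarrow> Q s M'"
    and ex: "\<And>s M. finite s \<Longrightarrow> M \<subseteq> N \<Longrightarrow> infinite M \<Longrightarrow> \<exists>M'\<subseteq>M. infinite M' \<and> Q s M'"
  shows "\<exists>Ms. \<forall>k. (Ms k \<subseteq> N \<and> infinite (Ms k)) \<and> Ms (Suc k) \<subseteq> Ms k - {LEAST n. n \<in> Ms k} \<and>
    (\<forall>s\<subseteq>{..LEAST n. n \<in> Ms k}. Q s (Ms (Suc k)))"
proof (rule dependent_nat_choice)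
  show "\<exists>M. M \<subseteq> N \<and> infinite M"
    using assms(1) by blast
  fix M :: "nat set" and k
  assume M: "M \<subseteq> N \<and> infinite M"
  let ?m = "LEAST n. n \<in> M"
  have "\<exists>M'\<subseteq>M - {?m}. infinite M' \<and> (\<forall>s\<in>Pow {..?m}. Q s M')"
    using M by (intro fusion_finite[OF hered ex]) (auto intro: finite_subset)
  with M show "\<exists>M'. (M' \<subseteq> N \<and> infinite M') \<and> M' \<subseteq> M - {?m} \<and> (\<forall>s\<subseteq>{..?m}. Q s M')"
    by blast
qed

lemma fusion:
  assumes "infinite N"
    and hered: "\<And>s M M'. M \<subseteq> N \<Longrightarrow> Q s M \<Longrightarrow> M' \<subseteq> M \<Longrightarrow> infinite M' \<Longrightarrow> Q s M'"
    and ex: "\<And>s M. finite s \<Longrightarrow> M \<subseteq> N \<Longrightarrow> infinite M \<Longrightarrow> \<exists>M'\<subseteq>M. infinite M' \<and> Q s M'"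
  shows "\<exists>N'\<subseteq>N. infinite N' \<and> (\<forall>s. finite s \<longrightarrow> s \<subseteq> N' \<longrightarrow> Q s (tail s N'))"
proof -
  from fusion_sequence[OF assms] obtain Ms :: "nat \<Rightarrow> nat set"
    where Ms_props: "\<forall>k. (Ms k \<subseteq> N \<and> infinite (Ms k)) \<and>
      Ms (Suc k) \<subseteq> Ms k - {LEAST n. n \<in> Ms k} \<and> (\<forall>s\<subseteq>{..LEAST n. n \<in> Ms k}. Q s (Ms (Suc k)))" ..
  have Ms: "Ms k \<subseteq> N" "infinite (Ms k)"
    and shrink: "Ms (Suc k) \<subseteq> Ms k - {LEAST n. n \<in> Ms k}"
    and Q: "s \<subseteq> {..LEAST n. n \<in> Ms k} \<Longrightarrow> Q s (Ms (Suc k))" for k s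
    using spec[OF Ms_props, of k] by blast+
  note seq = shrinking_seq_least[of Ms, OF Ms(2) shrink]
  define N' where "N' = range (\<lambda>k. LEAST n. n \<in> Ms (Suc k))"
  have "strict_mono (\<lambda>k. LEAST n. n \<in> Ms (Suc k))"
    using seq(3) unfolding strict_mono_def by simp
  then have "infinite N'"
    unfolding N'_def using range_inj_infinite strict_mono_imp_inj_on by blast
  moreover have "N' \<subseteq> N"
    unfolding N'_def using seq(1) Ms(1) by blast
  moreover have "Q s (tail s N')" if s: "finite s" "s \<subseteq> N'" for s
  proof -
    have "\<exists>k. s \<subseteq> {..LEAST n. n \<in> Ms k} \<and> tail s N' \<subseteq> Ms (Suc k)"
      using shrinking_seq_diagonal[of Ms, OF Ms(2) shrink s[unfolded N'_def]] by (simp add: N'_def)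
    then obtain k where k: "s \<subseteq> {..LEAST n. n \<in> Ms k}" "tail s N' \<subseteq> Ms (Suc k)"
      by blast
    show ?thesis
      using hered[OF Ms(1) Q[OF k(1)] k(2) infinite_tail[OF \<open>infinite N'\<close> s(1)]] .
  qed
  ultimately show ?thesis
    by blast
qed

definition front_on :: "nat set set \<Rightarrow> nat set \<Rightarrow> bool" where
  "front_on F N \<longleftrightarrow> (\<forall>Y\<subseteq>N. infinite Y \<longrightarrow> (\<exists>t\<in>F. init_seg t Y))"

text \<open>Acceptance and rejection as in Galvin and Prikry's proof of Nash-Williams' theorem.\<close>

definition accepts :: "nat set set \<Rightarrow> nat set \<Rightarrow> nat set \<Rightarrow> bool" where
  "accepts F s A \<longleftrightarrow> (\<forall>Y\<subseteq>A. infinite Y \<longrightarrow> (\<exists>t\<in>F. init_seg t (s \<union> tail s Y)))"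

definition rejects :: "nat set set \<Rightarrow> nat set \<Rightarrow> nat set \<Rightarrow> bool" where
  "rejects F s A \<longleftrightarrow> (\<forall>A'\<subseteq>A. infinite A' \<longrightarrow> \<not> accepts F s A')"

lemma accepts_mono: "accepts F s A \<Longrightarrow> A' \<subseteq> A \<Longrightarrow> accepts F s A'"
  unfolding accepts_def by blast

lemma rejects_mono: "rejects F s A \<Longrightarrow> A' \<subseteq> A \<Longrightarrow> rejects F s A'"
  unfolding rejects_def by blast

lemma exists_deciding_set:
  assumes "infinite M"
  shows "\<exists>N\<subseteq>M. infinite N \<and>
    (\<forall>s. finite s \<longrightarrow> s \<subseteq> N \<longrightarrow> accepts F s (tail s N) \<or> rejects F s (tail s N))"
proof (rule fusion[OF assms, where Q = "\<lambda>s A. accepts F s A \<or> rejects F s A"])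
  show "accepts F s M' \<or> rejects F s M'" if "accepts F s M \<or> rejects F s M" "M' \<subseteq> M" for s M M'
    using that accepts_mono rejects_mono by blast
  show "\<exists>M'\<subseteq>A. infinite M' \<and> (accepts F s M' \<or> rejects F s M')" if "infinite A" for s A
    using that unfolding rejects_def by blast
qed

lemma finite_accepting_extensions:
  assumes "rejects F s A" "\<forall>n\<in>A. above s n"
  shows "finite {n\<in>A. accepts F (insert n s) (tail (insert n s) A)}" (is "finite ?E")
proof (rule ccontr)
  assume "infinite ?E"
  have "accepts F s ?E"
    unfolding accepts_def[of F s]
  proof (intro allI impI)
    fix Z assume Z: "Z \<subseteq> ?E" "infinite Z"
    define m where "m = (LEAST n. n \<in> Z)"
    have "m \<in> Z"
      using Z(2) unfolding m_def by (metis LeastI finite.emptyI ex_in_conv)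
    have m_less: "m < z" if "z \<in> Z - {m}" for z
      using that Least_le[of "\<lambda>n. n \<in> Z" z] unfolding m_def by auto
    have tail_Z: "tail (insert m s) (Z - {m}) = Z - {m}" "tail s Z = Z"
      using m_less Z(1) assms(2) by (auto simp: tail_def)
    have "Z - {m} \<subseteq> tail (insert m s) A"
      using Z(1) m_less assms(2) by (auto simp: tail_def)
    moreover have "accepts F (insert m s) (tail (insert m s) A)"
      using \<open>m \<in> Z\<close> Z(1) by blast
    moreover have "infinite (Z - {m})"
      using Z(2) by simp
    ultimately have "\<exists>t\<in>F. init_seg t (insert m s \<union> tail (insert m s) (Z - {m}))"
      unfolding accepts_def by blast
    moreover have "insert m s \<union> tail (insert m s) (Z - {m}) = s \<union> tail s Z"
      using \<open>m \<in> Z\<close> tail_Z by auto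
    ultimately show "\<exists>t\<in>F. init_seg t (s \<union> tail s Z)" by auto
  qed
  moreover have "?E \<subseteq> A"
    by blast
  ultimately show False
    using assms(1) \<open>infinite ?E\<close> unfolding rejects_def[of F s A] by blast
qed

lemma rejection_propagates:
  assumes "infinite N1"
    and decided: "\<forall>s. finite s \<longrightarrow> s \<subseteq> N1 \<longrightarrow> accepts F s (tail s N1) \<or> rejects F s (tail s N1)"
  shows "\<exists>N2\<subseteq>N1. infinite N2 \<and> (\<forall>s. finite s \<longrightarrow> s \<subseteq> N2 \<longrightarrow> rejects F s (tail s N1) \<longrightarrow>
    (\<forall>n\<in>tail s N2. rejects F (insert n s) (tail (insert n s) N1)))"
proof -
  let ?Q = "\<lambda>s A. s \<subseteq> N1 \<longrightarrow> rejects F s (tail s N1) \<longrightarrow>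
    (\<forall>n\<in>tail s A. rejects F (insert n s) (tail (insert n s) N1))"
  have "\<exists>N2\<subseteq>N1. infinite N2 \<and> (\<forall>s. finite s \<longrightarrow> s \<subseteq> N2 \<longrightarrow> ?Q s (tail s N2))"
  proof (rule fusion[OF assms(1), where Q = ?Q])
    show "?Q s M'" if "?Q s M" "M' \<subseteq> M" for s M M'
      using that(1) tail_mono[OF that(2), of s] by blast
    show "\<exists>M'\<subseteq>M. infinite M' \<and> ?Q s M'" if "finite s" "M \<subseteq> N1" "infinite M" for s M
    proof (cases "s \<subseteq> N1 \<and> rejects F s (tail s N1)")
      case True
      let ?E = "{n \<in> tail s N1. accepts F (insert n s) (tail (insert n s) (tail s N1))}"
      have "finite ?E"
        using True by (intro finite_accepting_extensions) (auto simp: tail_def)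
      then have "infinite (M - ?E)"
        using that(3) by simp
      moreover have "rejects F (insert n s) (tail (insert n s) N1)" if "n \<in> tail s (M - ?E)" for n
      proof -
        have "n \<in> tail s N1" "n \<notin> ?E"
          using that \<open>M \<subseteq> N1\<close> by (auto simp: tail_def)
        then have "\<not> accepts F (insert n s) (tail (insert n s) N1)"
          by (simp add: tail_tail Un_absorb2 subset_insertI)
        moreover have "finite (insert n s)" "insert n s \<subseteq> N1"
          using True \<open>finite s\<close> \<open>n \<in> tail s N1\<close> by (auto simp: tail_def)
        ultimately show ?thesis
          using decided by blast
      qed
      ultimately show ?thesis
        by (intro exI[of _ "M - ?E"]) auto
    qed (use that in \<open>intro exI[of _ M], auto\<close>)
  qed
  then obtain N2 where "N2 \<subseteq> N1" "infinite N2" "\<forall>s. finite s \<longrightarrow> s \<subseteq> N2 \<longrightarrow> ?Q s (tail s N2)"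
    by blast
  moreover have "tail s (tail s N2) = tail s N2" for s
    by (simp add: tail_tail)
  ultimately show ?thesis
    by (metis order_trans)
qed

lemma accepts_member:
  assumes "t \<in> F"
  shows "accepts F t A"
proof -
  have "init_seg t (t \<union> tail t Y)" for Y
    by (rule init_seg_Un) (simp add: tail_def)
  with assms show ?thesis
    unfolding accepts_def by blast
qed

lemma rejects_all_finite_subsets:
  assumes "rejects F {} N1"
    and propagate: "\<forall>s. finite s \<longrightarrow> s \<subseteq> N2 \<longrightarrow> rejects F s (tail s N1) \<longrightarrow>
      (\<forall>n\<in>tail s N2. rejects F (insert n s) (tail (insert n s) N1))"
  shows "finite s \<Longrightarrow> s \<subseteq> N2 \<Longrightarrow> rejects F s (tail s N1)"
proof (induction s rule: finite_linorder_max_induct)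
  case (insert b s)
  then have "b \<in> tail s N2"
    by (auto simp: tail_def above_def)
  with insert propagate[rule_format, of s b] show ?case
    by simp
qed (use assms(1) in simp)

lemma nash_williams:
  assumes "infinite M" "\<forall>t\<in>F. finite t"
  shows "\<exists>N\<subseteq>M. infinite N \<and> ((\<forall>t\<in>F. \<not> t \<subseteq> N) \<or> front_on F N)"
proof -
  obtain N1 where N1: "N1 \<subseteq> M" "infinite N1"
    and decided: "\<forall>s. finite s \<longrightarrow> s \<subseteq> N1 \<longrightarrow> accepts F s (tail s N1) \<or> rejects F s (tail s N1)"
    using exists_deciding_set[OF assms(1)] by blast
  show ?thesis
  proof (cases "accepts F {} N1")
    case True
    then have "front_on F N1"
      by (simp add: accepts_def front_on_def)
    with N1 show ?thesis
      by (intro exI[of _ N1]) simp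
  next
    case False
    then have "rejects F {} N1"
      using decided[rule_format, of "{}"] by simp
    obtain N2 where N2: "N2 \<subseteq> N1" "infinite N2"
      and propagate: "\<forall>s. finite s \<longrightarrow> s \<subseteq> N2 \<longrightarrow> rejects F s (tail s N1) \<longrightarrow>
        (\<forall>n\<in>tail s N2. rejects F (insert n s) (tail (insert n s) N1))"
      using rejection_propagates[OF N1(2) decided] by blast
    have "\<not> t \<subseteq> N2" if "t \<in> F" for t
    proof
      assume "t \<subseteq> N2"
      then have "rejects F t (tail t N1)"
        using rejects_all_finite_subsets[OF \<open>rejects F {} N1\<close> propagate] assms(2) that by blast
      moreover have "infinite (tail t N1)"
        using infinite_tail[OF N1(2)] assms(2) that by blast
      ultimately show False
        using accepts_member[OF that] unfolding rejects_def[of F t "tail t N1"] by blast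
    qed
    with N1 N2 show ?thesis
      by (intro exI[of _ N2]) auto
  qed
qed

section \<open>Thin fronts with values in a wqo\<close>

definition thin :: "nat set set \<Rightarrow> bool" where
  "thin D \<longleftrightarrow> (\<forall>w\<in>D. \<forall>w'\<in>D. init_seg w w' \<longrightarrow> w = w')"

lemma front_on_mono: "front_on D M \<Longrightarrow> N \<subseteq> M \<Longrightarrow> front_on D N"
  unfolding front_on_def by blast

lemma thin_init_seg_unique:
  assumes "thin D" "w1 \<in> D" "w2 \<in> D" "init_seg w1 Y" "init_seg w2 Y"
  shows "w1 = w2"
  using init_seg_comparable[OF assms(4,5)]
proof
  assume "w1 \<subseteq> w2"
  then have "init_seg w1 w2"
    using init_seg_between[OF assms(4)] init_seg_subset[OF assms(5)] by blast
  then show ?thesis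
    using assms(1-3) unfolding thin_def by blast
next
  assume "w2 \<subseteq> w1"
  then have "init_seg w2 w1"
    using init_seg_between[OF assms(5)] init_seg_subset[OF assms(4)] by blast
  then show ?thesis
    using assms(1-3) unfolding thin_def by metis
qed

lemma thin_init_seg_Un_unique:
  assumes "thin D" "a \<in> D" "b \<in> D" "w \<in> D" "w' \<in> D"
    and "\<forall>y\<in>w'. above w y" "\<forall>y\<in>Y. above a y" "init_seg b Y"
    and "init_seg (w \<union> w') (a \<union> Y)"
  shows "w = a \<and> w' = b"
proof
  have "init_seg w (a \<union> Y)"
    using init_seg_trans[OF init_seg_Un assms(9)] assms(6) by blast
  then show "w = a"
    using thin_init_seg_unique[OF assms(1,4,2)] init_seg_Un[OF assms(7)] by blast
  with assms(6,7,9) have "init_seg w' Y"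
    using init_seg_Un_cancel by blast
  then show "w' = b"
    using thin_init_seg_unique[OF assms(1,5,3) _ assms(8)] by blast
qed

lemma front_on_blocks:
  assumes "front_on D N" "infinite N" "\<forall>w\<in>D. finite w"
  obtains b R :: "nat \<Rightarrow> nat set" where "\<And>k. b k \<in> D" "\<And>k. init_seg (b k) (R k)" "\<And>k. R k \<subseteq> N"
    "\<And>k. infinite (R k)" "\<And>i j. i < j \<Longrightarrow> R j \<subseteq> tail (b i) N"
proof -
  define pick where "pick A = (SOME w. w \<in> D \<and> init_seg w A)" for A
  have pick: "pick A \<in> D \<and> init_seg (pick A) A" if "A \<subseteq> N" "infinite A" for A
  proof -
    have "\<exists>w. w \<in> D \<and> init_seg w A"
      using assms(1) that unfolding front_on_def by blast
    then show ?thesis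
      unfolding pick_def by (rule someI_ex)
  qed
  define R where "R k = ((\<lambda>A. tail (pick A) A) ^^ k) N" for k
  have R_Suc: "R (Suc k) = tail (pick (R k)) (R k)" for k
    by (simp add: R_def)
  have R: "R k \<subseteq> N \<and> infinite (R k)" for k
  proof (induction k)
    case 0
    show ?case using assms(2) by (simp add: R_def)
  next
    case (Suc k)
    then have "finite (pick (R k))"
      using pick assms(3) by blast
    with Suc show ?case
      unfolding R_Suc using infinite_tail tail_subset by blast
  qed
  have R_anti: "R j \<subseteq> R i" if "i \<le> j" for i j
    using lift_Suc_antimono_le[of R, OF _ that] R_Suc tail_subset by metis
  show thesis
  proof (rule that[of "\<lambda>k. pick (R k)" R])
    show "R j \<subseteq> tail (pick (R i)) N" if "i < j" for i j
      using R_anti[of "Suc i" j] that tail_mono[of "R i" N] R R_Suc by auto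
  qed (use pick R in auto)
qed

definition bad_pairs :: "nat set set \<Rightarrow> (nat set \<Rightarrow> 'a::order) \<Rightarrow> nat set set" where
  "bad_pairs D \<kappa> = {w \<union> w' | w w'. w \<in> D \<and> w' \<in> D \<and> (\<forall>y\<in>w'. above w y) \<and> \<not> \<kappa> w \<le> \<kappa> w'}"

lemma not_front_on_bad_pairs:
  fixes \<kappa> :: "nat set \<Rightarrow> 'a::order"
  assumes wqo: "wqo_on P" and "infinite N" and thin: "thin D" and fin: "\<forall>w\<in>D. finite w"
    and front: "front_on D N" and vals: "\<And>w. w \<in> D \<Longrightarrow> w \<subseteq> N \<Longrightarrow> \<kappa> w \<in> P"
  shows "\<not> front_on (bad_pairs D \<kappa>) N"
proof
  assume front_bad: "front_on (bad_pairs D \<kappa>) N"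
  obtain b R :: "nat \<Rightarrow> nat set" where b: "\<And>k. b k \<in> D" and bR: "\<And>k. init_seg (b k) (R k)"
    and R: "\<And>k. R k \<subseteq> N" "\<And>k. infinite (R k)" and R_above: "\<And>i j. i < j \<Longrightarrow> R j \<subseteq> tail (b i) N"
    by (rule front_on_blocks[OF front \<open>infinite N\<close> fin]) blast
  have bad: "\<not> \<kappa> (b i) \<le> \<kappa> (b j)" if "i < j" for i j
  proof -
    have "b i \<union> R j \<subseteq> N" "infinite (b i \<union> R j)"
      using init_seg_subset[OF bR] R by auto
    then obtain t where "t \<in> bad_pairs D \<kappa>" "init_seg t (b i \<union> R j)"
      using front_bad unfolding front_on_def by blast
    then obtain w w' where "init_seg (w \<union> w') (b i \<union> R j)" and ww': "w \<in> D" "w' \<in> D"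
      "\<forall>y\<in>w'. above w y" "\<not> \<kappa> w \<le> \<kappa> w'"
      unfolding bad_pairs_def by auto
    moreover have "\<forall>y\<in>R j. above (b i) y"
      using R_above[OF that] by (auto simp: tail_def)
    ultimately have "w = b i \<and> w' = b j"
      using thin_init_seg_Un_unique[OF thin b b ww'(1,2,3)] bR by blast
    with ww'(4) show ?thesis
      by simp
  qed
  have "\<kappa> (b k) \<in> P" for k
    using vals[OF b] init_seg_subset[OF bR] R by blast
  then obtain i j where "i < j" "\<kappa> (b i) \<le> \<kappa> (b j)"
    using wqo_on_good_seq[OF wqo, of "\<lambda>k. \<kappa> (b k)"] by blast
  with bad show False
    by blast
qed

lemma wqo_on_front_increasing:
  fixes \<kappa> :: "nat set \<Rightarrow> 'a::order"
  assumes wqo: "wqo_on P" and "infinite M" and thin: "thin D" and fin: "\<forall>w\<in>D. finite w"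
    and front: "front_on D M" and vals: "\<And>w. w \<in> D \<Longrightarrow> w \<subseteq> M \<Longrightarrow> \<kappa> w \<in> P"
  shows "\<exists>M'\<subseteq>M. infinite M' \<and> (\<forall>w\<in>D. \<forall>w'\<in>D. w \<subseteq> M' \<longrightarrow> w' \<subseteq> tail w M' \<longrightarrow> \<kappa> w \<le> \<kappa> w')"
proof -
  have "\<forall>t\<in>bad_pairs D \<kappa>. finite t"
    using fin by (auto simp: bad_pairs_def)
  from nash_williams[OF \<open>infinite M\<close> this] obtain N
    where "N \<subseteq> M \<and> infinite N \<and> ((\<forall>t\<in>bad_pairs D \<kappa>. \<not> t \<subseteq> N) \<or> front_on (bad_pairs D \<kappa>) N)" ..
  then have N: "N \<subseteq> M" "infinite N"
    and alt: "(\<forall>t\<in>bad_pairs D \<kappa>. \<not> t \<subseteq> N) \<or> front_on (bad_pairs D \<kappa>) N"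
    by simp_all
  have "\<not> front_on (bad_pairs D \<kappa>) N"
    by (rule not_front_on_bad_pairs[OF wqo N(2) thin fin front_on_mono[OF front N(1)]])
      (use vals N(1) in blast)
  with alt have no_bad: "\<forall>t\<in>bad_pairs D \<kappa>. \<not> t \<subseteq> N"
    by blast
  have "\<kappa> w \<le> \<kappa> w'" if "w \<in> D" "w' \<in> D" "w \<subseteq> N" "w' \<subseteq> tail w N" for w w'
  proof (rule ccontr)
    assume "\<not> \<kappa> w \<le> \<kappa> w'"
    with that have "w \<union> w' \<in> bad_pairs D \<kappa>"
      unfolding bad_pairs_def tail_def by auto
    with no_bad that show False
      by (auto simp: tail_def)
  qed
  with N show ?thesis
    by (intro exI[of _ N]) auto
qed

section \<open>Barriers\<close>

lemma finite_subset_UN_incseq: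
  assumes "\<And>i. f i \<subseteq> f (Suc i)" "finite s" "s \<subseteq> (\<Union>i. f i)"
  obtains k where "s \<subseteq> f k"
proof -
  have "\<exists>k. s \<subseteq> f k"
    using assms(2,3)
  proof (induction s rule: finite_induct)
    case (insert x s)
    then obtain i k where "x \<in> f i" "s \<subseteq> f k"
      by blast
    moreover have "f i \<subseteq> f (max i k)" "f k \<subseteq> f (max i k)"
      using lift_Suc_mono_le[of f, OF assms(1)] by simp_all
    ultimately have "insert x s \<subseteq> f (max i k)"
      by blast
    then show ?case ..
  qed simp
  with that show thesis
    by blast
qed

definition barrier_seg :: "nat set set \<Rightarrow> nat set \<Rightarrow> nat set" where
  "barrier_seg B X = (SOME s. s \<in> B \<and> init_seg s X)"

definition barrier_prefix :: "nat set set \<Rightarrow> nat set \<Rightarrow> bool" where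
  "barrier_prefix B u \<longleftrightarrow> (\<exists>s\<in>B. init_seg u s)"

definition prefix_extension :: "nat set set \<Rightarrow> (nat set \<times> nat set) set" where
  "prefix_extension B =
    {(u', u). barrier_prefix B u \<and> barrier_prefix B u' \<and> init_seg u u' \<and> u \<noteq> u'}"

locale nat_barrier =
  fixes B :: "nat set set"
  assumes barrier: "barrier B"
begin

lemma finite_member: "s \<in> B \<Longrightarrow> finite s"
  using barrier by (simp add: barrier_def)

lemma antichain: "s \<in> B \<Longrightarrow> t \<in> B \<Longrightarrow> s \<subseteq> t \<Longrightarrow> s = t"
  using barrier unfolding barrier_def by blast

lemma front: "front_on B (\<Union>B)"
  using barrier unfolding barrier_def front_on_def by blast

lemma thin: "thin B"
  unfolding thin_def using antichain init_seg_subset by blast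

lemma member_nonempty: "s \<in> B \<Longrightarrow> s \<noteq> {}"
proof
  assume "s \<in> B" "s = {}"
  then have "B \<subseteq> {{}}"
    using antichain by blast
  moreover have "infinite B"
    using barrier by (simp add: barrier_def)
  ultimately show False
    using finite_subset by auto
qed

lemma infinite_Union: "infinite (\<Union>B)"
  using barrier unfolding barrier_def by (meson finite_UnionD)

lemma barrier_seg_eq: "s \<in> B \<Longrightarrow> init_seg s X \<Longrightarrow> barrier_seg B X = s"
  unfolding barrier_seg_def
  by (rule some_equality) (use thin_init_seg_unique[OF thin] in blast)+

lemma barrier_seg:
  assumes "X \<subseteq> \<Union>B" "infinite X"
  shows "barrier_seg B X \<in> B" "init_seg (barrier_seg B X) X"
proof -
  obtain s where "s \<in> B" "init_seg s X"
    using front assms unfolding front_on_def by blast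
  with barrier_seg_eq show "barrier_seg B X \<in> B" "init_seg (barrier_seg B X) X"
    by simp_all
qed

lemma prefix_subset_member: "barrier_prefix B u \<Longrightarrow> \<exists>s\<in>B. u \<subseteq> s"
  unfolding barrier_prefix_def using init_seg_subset by blast

lemma wf_prefix_extension: "wf (prefix_extension B)"
proof (rule ccontr)
  assume "\<not> wf (prefix_extension B)"
  then obtain f where "\<And>i. (f (Suc i), f i) \<in> prefix_extension B"
    unfolding wf_iff_no_infinite_down_chain by blast
  then have prefix: "barrier_prefix B (f i)" and grow: "f i \<subset> f (Suc i)" for i
    unfolding prefix_extension_def using init_seg_subset by blast+
  have mono: "f i \<subseteq> f (Suc i)" for i
    using grow by blast
  define X where "X = (\<Union>i. f i)"
  have "infinite X"
  proof
    assume "finite X"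
    moreover have "X \<subseteq> (\<Union>i. f i)"
      by (simp add: X_def)
    ultimately obtain k where "X \<subseteq> f k"
      by (rule finite_subset_UN_incseq[of f, OF mono])
    with grow[of k] show False
      unfolding X_def by blast
  qed
  moreover have "X \<subseteq> \<Union>B"
    unfolding X_def using prefix_subset_member[OF prefix] by blast
  ultimately obtain s where "s \<in> B" "init_seg s X"
    using front unfolding front_on_def by blast
  moreover from this have "finite s" "s \<subseteq> (\<Union>i. f i)"
    using finite_member init_seg_subset X_def by blast+
  ultimately obtain k where "s \<subseteq> f k"
    using finite_subset_UN_incseq[of f, OF mono] by blast
  moreover obtain t where "t \<in> B" "f (Suc k) \<subseteq> t"
    using prefix_subset_member[OF prefix] by blast
  ultimately have "f (Suc k) \<subseteq> f k"
    using antichain[OF \<open>s \<in> B\<close>] grow[of k] by blast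
  with grow[of k] show False
    by blast
qed

lemma shift_rel_barrier_seg:
  assumes X: "X \<subseteq> \<Union>B" "infinite X"
  shows "barrier_seg B X \<lhd> barrier_seg B (shift X)"
proof -
  define s t m where "s = barrier_seg B X" and "t = barrier_seg B (shift X)"
    and "m = (LEAST n. n \<in> X)"
  have s: "s \<in> B" "init_seg s X"
    using barrier_seg[OF X] by (simp_all add: s_def)
  have "shift X \<subseteq> \<Union>B"
    using X(1) shift_subset by blast
  then have t: "t \<in> B" "init_seg t (shift X)"
    using barrier_seg[OF _ infinite_shift[OF X(2)]] by (simp_all add: t_def)
  have "m \<in> s"
    using init_seg_Least[OF s(2) member_nonempty[OF s(1)]] by (simp add: m_def)
  have m_less: "\<forall>y\<in>t. m < y"
    using Least_less_shift init_seg_subset[OF t(2)] by (auto simp: m_def)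
  define r where "r = insert m t"
  have "init_seg r X"
    using init_seg_insert_Least[OF _ t(2)] X(2) by (auto simp: r_def m_def)
  moreover have "\<not> r \<subseteq> s"
  proof
    assume "r \<subseteq> s"
    then have "t = s"
      using antichain[OF t(1) s(1)] by (simp add: r_def)
    with \<open>m \<in> s\<close> m_less show False
      by blast
  qed
  ultimately have "s \<subseteq> r" "s \<noteq> r"
    using init_seg_comparable[OF s(2)] by blast+
  then have "init_seg s r" "s \<noteq> r"
    using init_seg_between[OF s(2) _ init_seg_subset[OF \<open>init_seg r X\<close>]] by blast+
  moreover have "finite r"
    using finite_member[OF t(1)] by (simp add: r_def)
  moreover have "Min r = m" "m \<notin> t"
    using m_less unfolding r_def
    by (auto intro: Min_insert2[OF finite_member[OF t(1)]] less_imp_le)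
  then have "r - {Min r} = t"
    by (simp add: r_def)
  ultimately show ?thesis
    unfolding shift_rel_def s_def t_def by blast
qed

lemma barrier_prefix_empty: "barrier_prefix B {}"
proof -
  have "infinite B"
    using barrier by (simp add: barrier_def)
  then obtain s where "s \<in> B"
    by (metis ex_in_conv finite.emptyI)
  then show ?thesis
    unfolding barrier_prefix_def init_seg_def by blast
qed

end

section \<open>Bad maps above a prefix\<close>

definition bad_at :: "nat set set \<Rightarrow> 'a::order set \<Rightarrow> (nat set \<Rightarrow> 'a) \<Rightarrow> nat set \<Rightarrow> nat set \<Rightarrow> bool" where
  "bad_at B P h u N \<longleftrightarrow> infinite N \<and> N \<subseteq> \<Union>B \<and> (\<forall>n\<in>N. above u n) \<and>
    (\<forall>X\<subseteq>N. infinite X \<longrightarrow> h (barrier_seg B (u \<union> X)) \<in> P \<and>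
      \<not> h (barrier_seg B (u \<union> X)) \<le> h (barrier_seg B (u \<union> shift X)))"

lemma (in nat_barrier) not_bad_at_member:
  assumes "u \<in> B"
  shows "\<not> bad_at B P h u N"
proof
  assume "bad_at B P h u N"
  then have N: "infinite N" "\<forall>n\<in>N. above u n"
    and "\<not> h (barrier_seg B (u \<union> N)) \<le> h (barrier_seg B (u \<union> shift N))"
    unfolding bad_at_def by blast+
  moreover have "barrier_seg B (u \<union> Y) = u" if "Y \<subseteq> N" for Y
    using that N(2) by (intro barrier_seg_eq[OF assms] init_seg_Un) blast
  ultimately show False
    using shift_subset[of N] by simp
qed

lemma (in nat_barrier) bad_at_empty_if_not_good:
  assumes "f ` B \<subseteq> P" "\<not> good_map B f"
  shows "bad_at B P f {} (\<Union>B)"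
  unfolding bad_at_def
proof (intro conjI allI impI ballI)
  show "infinite (\<Union>B)" "\<Union>B \<subseteq> \<Union>B"
    using infinite_Union by simp_all
  show "above {} n" for n
    by simp
  fix X assume X: "X \<subseteq> \<Union>B" "infinite X"
  then have "shift X \<subseteq> \<Union>B" "infinite (shift X)"
    using shift_subset infinite_shift by blast+
  then have "barrier_seg B X \<in> B" "barrier_seg B (shift X) \<in> B"
    using barrier_seg X by blast+
  with shift_rel_barrier_seg[OF X] assms show "f (barrier_seg B ({} \<union> X)) \<in> P"
    "\<not> f (barrier_seg B ({} \<union> X)) \<le> f (barrier_seg B ({} \<union> shift X))"
    unfolding good_map_def by auto
qed

locale bad_node = nat_barrier +
  fixes P :: "'a::order set" and u N :: "nat set" and h :: "nat set \<Rightarrow> 'a"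
  assumes wqo: "wqo_on P" and chain: "is_chain_incl (nonprincipal_ideals P)"
    and prefix: "barrier_prefix B u" and not_member: "u \<notin> B" and bad: "bad_at B P h u N"
begin

lemma N_infinite: "infinite N"
  and N_subset: "N \<subseteq> \<Union>B"
  and N_above: "n \<in> N \<Longrightarrow> above u n"
  and bad_value: "X \<subseteq> N \<Longrightarrow> infinite X \<Longrightarrow> h (barrier_seg B (u \<union> X)) \<in> P"
  and bad_step: "X \<subseteq> N \<Longrightarrow> infinite X \<Longrightarrow>
    \<not> h (barrier_seg B (u \<union> X)) \<le> h (barrier_seg B (u \<union> shift X))"
  using bad unfolding bad_at_def by blast+

definition heads :: "nat set set" where
  "heads = {s. u \<union> s \<in> B \<and> s \<noteq> {} \<and> (\<forall>y\<in>s. above u y)}"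

definition head :: "nat set \<Rightarrow> nat set" where
  "head X = barrier_seg B (u \<union> X) - u"

text \<open>
  If the barrier picks u \<union> s for X, then for shift X it picks stem s \<union> w, where w is the
  successor block that is an initial segment of the part of X beyond s.
\<close>

abbreviation stem :: "nat set \<Rightarrow> nat set" where
  "stem s \<equiv> u \<union> (s - {Min s})"

definition succ_blocks :: "nat set \<Rightarrow> nat set set" where
  "succ_blocks s = {w. w \<noteq> {} \<and> (\<forall>y\<in>w. above s y) \<and> stem s \<union> w \<in> B}"

definition succ_val :: "nat set \<Rightarrow> nat set \<Rightarrow> 'a" where
  "succ_val s w = h (stem s \<union> w)"

lemma heads_finite: "s \<in> heads \<Longrightarrow> finite s"
  unfolding heads_def using finite_member by auto

lemma heads_above:
  assumes "s \<in> heads" "above s y"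
  shows "above (stem s) y"
proof -
  have "Min s \<in> s"
    using assms(1) heads_finite by (auto simp: heads_def)
  then have "above u (Min s)" "Min s < y"
    using assms by (auto simp: heads_def above_def)
  then have "above u y"
    by (auto simp: above_def)
  with assms(2) show ?thesis
    by (auto simp: above_def)
qed

lemma barrier_seg_extends_node:
  assumes "X \<subseteq> N" "infinite X"
  shows "barrier_seg B (u \<union> X) \<in> B" "init_seg (barrier_seg B (u \<union> X)) (u \<union> X)"
    "u \<subset> barrier_seg B (u \<union> X)"
proof -
  let ?s = "barrier_seg B (u \<union> X)"
  have "u \<union> X \<subseteq> \<Union>B"
    using assms(1) N_subset prefix_subset_member[OF prefix] by blast
  then show s: "?s \<in> B" "init_seg ?s (u \<union> X)"
    using barrier_seg assms(2) by simp_all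
  have "init_seg u (u \<union> X)"
    using assms(1) N_above by (intro init_seg_Un) blast
  moreover have "\<not> ?s \<subseteq> u"
  proof
    assume "?s \<subseteq> u"
    obtain t where "t \<in> B" "u \<subseteq> t"
      using prefix_subset_member[OF prefix] by blast
    with \<open>?s \<subseteq> u\<close> have "?s = t"
      using antichain[OF s(1)] by blast
    with \<open>?s \<subseteq> u\<close> \<open>u \<subseteq> t\<close> have "u = t"
      by blast
    with \<open>t \<in> B\<close> not_member show False
      by simp
  qed
  ultimately show "u \<subset> ?s"
    using init_seg_comparable[OF s(2)] by blast
qed

lemma head:
  assumes "X \<subseteq> N" "infinite X"
  shows "head X \<in> heads" "init_seg (head X) X" "barrier_seg B (u \<union> X) = u \<union> head X"
proof -
  note s = barrier_seg_extends_node[OF assms]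
  show eq: "barrier_seg B (u \<union> X) = u \<union> head X"
    using s(3) by (auto simp: head_def)
  have X_above: "\<forall>y\<in>X. above u y"
    using assms(1) N_above by blast
  have "head X \<subseteq> X"
    using init_seg_subset[OF s(2)] by (auto simp: head_def)
  with X_above have head_above: "\<forall>y\<in>head X. above u y"
    by blast
  with s eq show "head X \<in> heads"
    unfolding heads_def by auto
  show "init_seg (head X) X"
    using init_seg_Un_cancel[of u "head X" X] s(2) eq head_above X_above by simp
qed

lemma head_eq:
  assumes "X \<subseteq> N" "infinite X" "s \<in> heads" "init_seg s X"
  shows "head X = s"
proof -
  have "init_seg (u \<union> s) (u \<union> X)"
    using assms(1) N_above by (intro init_seg_Un_mono[OF assms(4)]) blast
  then have "barrier_seg B (u \<union> X) = u \<union> s"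
    using assms(3) barrier_seg_eq by (simp add: heads_def)
  moreover have "u \<inter> s = {}"
    using assms(3) above_disjoint by (simp add: heads_def)
  ultimately show ?thesis
    by (auto simp: head_def)
qed

lemma succ_blocks_finite: "w \<in> succ_blocks s \<Longrightarrow> finite w"
  unfolding succ_blocks_def using finite_member by auto

lemma succ_blocks_disjoint:
  "s \<in> heads \<Longrightarrow> w \<in> succ_blocks s \<Longrightarrow> (stem s) \<inter> w = {}"
  using heads_above by (intro above_disjoint) (auto simp: succ_blocks_def above_def)

lemma thin_succ_blocks: "s \<in> heads \<Longrightarrow> thin (succ_blocks s)"
  unfolding thin_def
proof (intro ballI impI)
  fix w w' assume s: "s \<in> heads" and w: "w \<in> succ_blocks s" "w' \<in> succ_blocks s"
    and "init_seg w w'"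
  then have "stem s \<union> w \<subseteq> stem s \<union> w'"
    using init_seg_subset by blast
  then have "stem s \<union> w = stem s \<union> w'"
    using antichain w by (simp add: succ_blocks_def)
  with succ_blocks_disjoint[OF s w(1)] succ_blocks_disjoint[OF s w(2)] show "w = w'"
    by blast
qed

lemma not_member_subset_stem:
  assumes "s \<in> heads" "t \<in> B"
  shows "\<not> t \<subseteq> stem s"
proof
  assume t_sub: "t \<subseteq> stem s"
  then have "t = u \<union> s"
    using antichain[OF assms(2)] assms(1) by (auto simp: heads_def)
  moreover have "Min s \<in> s"
    using assms(1) heads_finite by (auto simp: heads_def)
  moreover from this have "Min s \<notin> u"
    using assms(1) by (auto simp: heads_def above_def)
  ultimately show False
    using t_sub by blast
qed

lemma front_on_succ_blocks:
  assumes "s \<in> heads" "M \<subseteq> \<Union>B"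
  shows "front_on (succ_blocks s) (tail s M)"
  unfolding front_on_def
proof (intro allI impI)
  fix Y assume Y: "Y \<subseteq> tail s M" "infinite Y"
  define a where "a = stem s"
  have Y_above: "\<forall>y\<in>Y. above a y"
    using Y(1) heads_above[OF assms(1)] by (auto simp: tail_def a_def)
  have "Y \<subseteq> \<Union>B"
    using Y(1) assms(2) tail_subset by blast
  moreover have "u \<union> s \<subseteq> \<Union>B"
    using assms(1) by (auto simp: heads_def)
  ultimately have "a \<union> Y \<subseteq> \<Union>B"
    by (auto simp: a_def)
  let ?t = "barrier_seg B (a \<union> Y)"
  have t: "?t \<in> B" "init_seg ?t (a \<union> Y)"
    using barrier_seg \<open>a \<union> Y \<subseteq> \<Union>B\<close> Y(2) by simp_all
  have "\<not> ?t \<subseteq> a"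
    using not_member_subset_stem[OF assms(1) t(1)] by (simp add: a_def)
  then have "a \<subseteq> ?t"
    using init_seg_comparable[OF t(2) init_seg_Un[OF Y_above]] by blast
  define w where "w = ?t - a"
  have "?t = a \<union> w"
    using \<open>a \<subseteq> ?t\<close> by (auto simp: w_def)
  have "w \<subseteq> Y"
    using init_seg_subset[OF t(2)] by (auto simp: w_def)
  then have "init_seg w Y"
    using init_seg_Un_cancel[of a w Y] t(2) \<open>?t = a \<union> w\<close> Y_above by auto
  moreover have "w \<in> succ_blocks s"
    using \<open>\<not> ?t \<subseteq> a\<close> \<open>?t = a \<union> w\<close> t(1) \<open>w \<subseteq> Y\<close> Y(1)
    by (auto simp: succ_blocks_def tail_def a_def)
  ultimately show "\<exists>w\<in>succ_blocks s. init_seg w Y"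
    by blast
qed

lemma barrier_seg_succ:
  assumes "s \<in> heads" "w \<in> succ_blocks s" "init_seg w Y" "\<forall>y\<in>Y. above s y"
  shows "barrier_seg B (stem s \<union> Y) = stem s \<union> w"
  using assms heads_above[OF assms(1)]
  by (intro barrier_seg_eq init_seg_Un_mono) (auto simp: succ_blocks_def)

lemma barrier_seg_shift:
  assumes "X \<subseteq> N" "infinite X" "w \<in> succ_blocks (head X)" "init_seg w (tail (head X) X)"
  shows "barrier_seg B (u \<union> shift X) = stem (head X) \<union> w"
proof -
  note hX = head[OF assms(1,2)]
  have "shift X = (head X - {Min (head X)}) \<union> tail (head X) X"
    using shift_init_seg[OF hX(2)] hX(1) heads_finite by (simp add: heads_def)
  then show ?thesis
    using barrier_seg_succ[OF hX(1) assms(3,4)] by (simp add: tail_def Un_assoc)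
qed

lemma head_not_le_succ_val:
  assumes s: "s \<in> heads" "s \<subseteq> N" and w: "w \<in> succ_blocks s" "w \<subseteq> N"
  shows "\<not> h (u \<union> s) \<le> succ_val s w" "h (u \<union> s) \<in> P" "succ_val s w \<in> P"
proof -
  have w_above: "\<forall>y\<in>w. above s y"
    using w(1) by (simp add: succ_blocks_def)
  define X where "X = s \<union> w \<union> tail (s \<union> w) N"
  have X: "X \<subseteq> N" "infinite X"
    using s w tail_subset infinite_tail[OF N_infinite] heads_finite succ_blocks_finite
    by (auto simp: X_def)
  have "init_seg s X"
    unfolding X_def Un_assoc using w_above by (intro init_seg_Un) (auto simp: tail_def)
  then have hX: "head X = s"
    using head_eq[OF X s(1)] by simp
  have "tail s X = w \<union> tail (s \<union> w) N"
    using w_above by (auto simp: X_def tail_def above_def)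
  then have "init_seg w (tail s X)"
    by (auto intro: init_seg_Un simp: tail_def)
  then have "barrier_seg B (u \<union> shift X) = stem s \<union> w"
    using barrier_seg_shift[OF X] w(1) hX by simp
  moreover have "barrier_seg B (u \<union> X) = u \<union> s"
    using head[OF X] hX by simp
  moreover have "shift X \<subseteq> N" "infinite (shift X)"
    using X shift_subset infinite_shift by blast+
  ultimately show "\<not> h (u \<union> s) \<le> succ_val s w" "h (u \<union> s) \<in> P" "succ_val s w \<in> P"
    using bad_step[OF X] bad_value[OF X] bad_value[of "shift X"] by (simp_all add: succ_val_def)
qed

lemma shift_value_succ_val:
  assumes "X \<subseteq> N" "infinite X"
  shows "\<exists>w\<in>succ_blocks (head X). w \<subseteq> tail (head X) X \<and>
    h (barrier_seg B (u \<union> shift X)) = succ_val (head X) w"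
proof -
  note hX = head[OF assms]
  have "X \<subseteq> \<Union>B" "infinite (tail (head X) X)"
    using assms N_subset infinite_tail heads_finite[OF hX(1)] by blast+
  then obtain w where w: "w \<in> succ_blocks (head X)" "init_seg w (tail (head X) X)"
    using front_on_succ_blocks[OF hX(1)] unfolding front_on_def by blast
  show ?thesis
    using barrier_seg_shift[OF assms w] init_seg_subset[OF w(2)]
    by (intro bexI[OF _ w(1)]) (simp add: succ_val_def)
qed

lemma bad_at_transfer:
  assumes "N' \<subseteq> N" "infinite N'" "\<forall>n\<in>N'. above u' n"
    and transfer: "\<And>Z. Z \<subseteq> N' \<Longrightarrow> infinite Z \<Longrightarrow>
      h (barrier_seg B (u \<union> Z)) = h' (barrier_seg B (u' \<union> Z))"
  shows "bad_at B P h' u' N'"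
  unfolding bad_at_def
proof (intro conjI allI impI)
  show "infinite N'" "N' \<subseteq> \<Union>B" "\<forall>n\<in>N'. above u' n"
    using assms(1-3) N_subset by blast+
  fix X assume X: "X \<subseteq> N'" "infinite X"
  then have "shift X \<subseteq> N'" "infinite (shift X)" "X \<subseteq> N"
    using shift_subset infinite_shift assms(1) by blast+
  with X show "h' (barrier_seg B (u' \<union> X)) \<in> P"
    "\<not> h' (barrier_seg B (u' \<union> X)) \<le> h' (barrier_seg B (u' \<union> shift X))"
    using transfer bad_value bad_step by metis+
qed

lemma barrier_seg_insert:
  assumes "m \<in> N" "Z \<subseteq> N" "infinite Z" "\<forall>z\<in>Z. m < z"
  shows "barrier_seg B (insert m u \<union> Z) = u \<union> head (insert m Z)"
    and "barrier_seg B (insert m u \<union> Z) \<in> B"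
    and "init_seg (insert m u) (barrier_seg B (insert m u \<union> Z))"
proof -
  define Z0 where "Z0 = insert m Z"
  have Z0: "Z0 \<subseteq> N" "infinite Z0"
    using assms(1-3) by (auto simp: Z0_def)
  note hZ = head[OF Z0] barrier_seg_extends_node[OF Z0]
  have eq: "u \<union> Z0 = insert m u \<union> Z"
    by (auto simp: Z0_def)
  with hZ(3,4) show seg: "barrier_seg B (insert m u \<union> Z) = u \<union> head (insert m Z)"
    and "barrier_seg B (insert m u \<union> Z) \<in> B"
    by (simp_all add: Z0_def)
  have "(LEAST n. n \<in> Z0) = m"
    using assms(4) by (intro Least_equality) (auto simp: Z0_def less_imp_le)
  then have "m \<in> head Z0"
    using init_seg_Least[OF hZ(2)] hZ(1) by (auto simp: heads_def)
  then have "insert m u \<subseteq> barrier_seg B (insert m u \<union> Z)"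
    using seg by (simp add: Z0_def)
  moreover have "init_seg (insert m u) (insert m u \<union> Z)"
    using assms(2,4) N_above by (intro init_seg_Un) auto
  ultimately show "init_seg (insert m u) (barrier_seg B (insert m u \<union> Z))"
    using hZ(5) eq init_seg_between init_seg_subset by metis
qed

lemma extension_if_head_determines_shift:
  assumes N2: "N2 \<subseteq> N" "infinite N2"
    and determined: "\<And>X. X \<subseteq> N2 \<Longrightarrow> infinite X \<Longrightarrow> h (barrier_seg B (u \<union> shift X)) = p (head X)"
  shows "\<exists>u' N' h'. (u', u) \<in> prefix_extension B \<and> bad_at B P h' u' N'"
proof -
  define m where "m = (LEAST n. n \<in> N2)"
  define u' N' where "u' = insert m u" and "N' = N2 - {m}"
  define h' where "h' t = p (t - u)" for t
  have "m \<in> N2"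
    using N2(2) unfolding m_def by (metis LeastI finite.emptyI ex_in_conv)
  have m_less: "\<forall>n\<in>N'. m < n"
    using Least_le[of "\<lambda>n. n \<in> N2"] unfolding N'_def m_def by fastforce
  have N': "N' \<subseteq> N" "infinite N'" "m \<in> N"
    using N2 \<open>m \<in> N2\<close> by (auto simp: N'_def)
  have seg: "barrier_seg B (u' \<union> Z) = u \<union> head (insert m Z)" "barrier_seg B (u' \<union> Z) \<in> B"
    "init_seg u' (barrier_seg B (u' \<union> Z))" if "Z \<subseteq> N'" "infinite Z" for Z
    using barrier_seg_insert[OF N'(3), of Z] that N'(1) m_less unfolding u'_def by blast+
  have h': "h (barrier_seg B (u \<union> Z)) = h' (barrier_seg B (u' \<union> Z))"
    if Z: "Z \<subseteq> N'" "infinite Z" for Z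
  proof -
    have "insert m Z \<subseteq> N2"
      using Z(1) \<open>m \<in> N2\<close> by (auto simp: N'_def)
    moreover have "shift (insert m Z) = Z"
      using Z(1) m_less by (intro shift_insert) blast
    moreover have "head (insert m Z) \<in> heads"
      using head(1) Z N' by simp
    then have "(u \<union> head (insert m Z)) - u = head (insert m Z)"
      using above_disjoint by (auto simp: heads_def)
    ultimately show ?thesis
      using determined[of "insert m Z"] seg(1)[OF Z] Z by (auto simp: h'_def)
  qed
  have "barrier_prefix B u'"
    using seg(2,3)[OF order_refl N'(2)] unfolding barrier_prefix_def by blast
  moreover have "init_seg u u'" "u \<noteq> u'"
    using N_above[OF N'(3)] init_seg_Un[of "{m}" u] by (auto simp: u'_def above_def)
  ultimately have "(u', u) \<in> prefix_extension B"
    using prefix by (simp add: prefix_extension_def)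
  moreover have "\<forall>n\<in>N'. above u' n"
    using m_less N_above N'(1) by (auto simp: u'_def)
  then have "bad_at B P h' u' N'"
    by (rule bad_at_transfer[OF N'(1,2) _ h'])
  ultimately show ?thesis
    by blast
qed

definition increasing_on :: "nat set \<Rightarrow> nat set \<Rightarrow> bool" where
  "increasing_on s M \<longleftrightarrow> (\<forall>w\<in>succ_blocks s. \<forall>w'\<in>succ_blocks s.
    w \<subseteq> M \<longrightarrow> w' \<subseteq> tail w M \<longrightarrow> succ_val s w \<le> succ_val s w')"

definition constant_on :: "nat set \<Rightarrow> nat set \<Rightarrow> bool" where
  "constant_on s M \<longleftrightarrow> (\<forall>w\<in>succ_blocks s. \<forall>w'\<in>succ_blocks s.
    w \<subseteq> M \<longrightarrow> w' \<subseteq> M \<longrightarrow> succ_val s w = succ_val s w')"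

definition has_max :: "nat set \<Rightarrow> nat set \<Rightarrow> bool" where
  "has_max s M \<longleftrightarrow> (\<exists>w\<in>succ_blocks s. w \<subseteq> M \<and>
    (\<forall>w'\<in>succ_blocks s. w' \<subseteq> M \<longrightarrow> succ_val s w' \<le> succ_val s w))"

definition homogeneous :: "nat set \<Rightarrow> nat set \<Rightarrow> bool" where
  "homogeneous s M \<longleftrightarrow> increasing_on s M \<and> (has_max s M \<longrightarrow> constant_on s M)"

lemma exists_succ_block:
  assumes "s \<in> heads" "M \<subseteq> \<Union>B" "infinite M" "finite A"
  shows "\<exists>w\<in>succ_blocks s. w \<subseteq> tail (s \<union> A) M"
proof -
  have "tail (s \<union> A) M \<subseteq> tail s M"
    by (auto simp: tail_def)
  moreover have "infinite (tail (s \<union> A) M)"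
    using infinite_tail[OF assms(3)] heads_finite[OF assms(1)] assms(4) by simp
  ultimately have "\<exists>w\<in>succ_blocks s. init_seg w (tail (s \<union> A) M)"
    using front_on_succ_blocks[OF assms(1,2)] unfolding front_on_def by blast
  then show ?thesis
    using init_seg_subset by blast
qed

lemma increasing_on_mono:
  assumes "increasing_on s M" "M' \<subseteq> M"
  shows "increasing_on s M'"
  unfolding increasing_on_def
proof (intro ballI impI)
  fix w w' assume w: "w \<in> succ_blocks s" "w' \<in> succ_blocks s" "w \<subseteq> M'" "w' \<subseteq> tail w M'"
  then have "w \<subseteq> M" "w' \<subseteq> tail w M"
    using assms(2) tail_mono[OF assms(2), of w] by blast+
  with assms(1) w(1,2) show "succ_val s w \<le> succ_val s w'"
    unfolding increasing_on_def by blast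
qed

lemma constant_on_mono:
  assumes "constant_on s M" "M' \<subseteq> M"
  shows "constant_on s M'"
  unfolding constant_on_def
proof (intro ballI impI)
  fix w w' assume w: "w \<in> succ_blocks s" "w' \<in> succ_blocks s" "w \<subseteq> M'" "w' \<subseteq> M'"
  then have "w \<subseteq> M" "w' \<subseteq> M"
    using assms(2) by blast+
  with assms(1) w(1,2) show "succ_val s w = succ_val s w'"
    unfolding constant_on_def by blast
qed

lemma has_max_of_subset:
  assumes "s \<in> heads" "M \<subseteq> \<Union>B" "increasing_on s M" "M' \<subseteq> M" "infinite M'" "has_max s M'"
  shows "has_max s M"
proof -
  obtain w0 where w0: "w0 \<in> succ_blocks s" "w0 \<subseteq> M'"
    and max: "\<And>w'. w' \<in> succ_blocks s \<Longrightarrow> w' \<subseteq> M' \<Longrightarrow> succ_val s w' \<le> succ_val s w0"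
    using assms(6) unfolding has_max_def by blast
  have "succ_val s w \<le> succ_val s w0" if w: "w \<in> succ_blocks s" "w \<subseteq> M" for w
  proof -
    obtain w'' where w'': "w'' \<in> succ_blocks s" "w'' \<subseteq> tail (s \<union> w) M'"
      using exists_succ_block[OF assms(1) _ assms(5) succ_blocks_finite[OF w(1)]] assms(2,4)
      by blast
    then have "w'' \<subseteq> tail w M" "w'' \<subseteq> M'"
      using assms(4) by (auto simp: tail_def)
    then have "succ_val s w \<le> succ_val s w''"
      using assms(3) w w''(1) unfolding increasing_on_def by blast
    also have "\<dots> \<le> succ_val s w0"
      using max w''(1) \<open>w'' \<subseteq> M'\<close> .
    finally show ?thesis .
  qed
  with w0 assms(4) show ?thesis
    unfolding has_max_def by (intro bexI[OF _ w0(1)]) auto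
qed

lemma homogeneous_mono:
  assumes "s \<in> heads" "M \<subseteq> \<Union>B" "homogeneous s M" "M' \<subseteq> M" "infinite M'"
  shows "homogeneous s M'"
proof -
  have inc: "increasing_on s M"
    using assms(3) by (simp add: homogeneous_def)
  have "has_max s M' \<Longrightarrow> constant_on s M'"
    using has_max_of_subset[OF assms(1,2) inc assms(4,5)] assms(3) constant_on_mono[OF _ assms(4)]
    by (simp add: homogeneous_def)
  with increasing_on_mono[OF inc assms(4)] show ?thesis
    by (simp add: homogeneous_def)
qed

lemma exists_increasing:
  assumes s: "s \<in> heads" "s \<subseteq> N" and M: "M \<subseteq> N" "infinite M"
  shows "\<exists>M'\<subseteq>M. infinite M' \<and> increasing_on s M'"
proof -
  define M1 where "M1 = tail s M"
  have M1: "M1 \<subseteq> M" "infinite M1"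
    using infinite_tail[OF M(2) heads_finite[OF s(1)]] tail_subset by (auto simp: M1_def)
  have "\<exists>M'\<subseteq>M1. infinite M' \<and> (\<forall>w\<in>succ_blocks s. \<forall>w'\<in>succ_blocks s.
      w \<subseteq> M' \<longrightarrow> w' \<subseteq> tail w M' \<longrightarrow> succ_val s w \<le> succ_val s w')"
  proof (rule wqo_on_front_increasing[OF wqo M1(2) thin_succ_blocks[OF s(1)]])
    show "\<forall>w\<in>succ_blocks s. finite w"
      using succ_blocks_finite by blast
    show "front_on (succ_blocks s) M1"
      unfolding M1_def using front_on_succ_blocks[OF s(1)] M(1) N_subset by blast
    show "succ_val s w \<in> P" if "w \<in> succ_blocks s" "w \<subseteq> M1" for w
      using head_not_le_succ_val(3)[OF s that(1)] that(2) M1(1) M(1) by blast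
  qed
  then obtain M' where "M' \<subseteq> M1" "infinite M'" "increasing_on s M'"
    unfolding increasing_on_def by blast
  with M1(1) show ?thesis
    by (intro exI[of _ M']) auto
qed

lemma increasing_has_max_imp_constant:
  assumes "increasing_on s M" "has_max s M" "infinite M"
  shows "\<exists>M'\<subseteq>M. infinite M' \<and> increasing_on s M' \<and> constant_on s M'"
proof -
  obtain w0 where w0: "w0 \<in> succ_blocks s" "w0 \<subseteq> M"
    and max: "\<forall>w'\<in>succ_blocks s. w' \<subseteq> M \<longrightarrow> succ_val s w' \<le> succ_val s w0"
    using assms(2) unfolding has_max_def by blast
  define M' where "M' = tail w0 M"
  have M': "M' \<subseteq> M" "infinite M'"
    using infinite_tail[OF assms(3) succ_blocks_finite[OF w0(1)]] tail_subset by (auto simp: M'_def)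
  have "succ_val s w = succ_val s w0" if "w \<in> succ_blocks s" "w \<subseteq> M'" for w
  proof (rule order.antisym)
    show "succ_val s w \<le> succ_val s w0"
      using max that M'(1) by blast
    show "succ_val s w0 \<le> succ_val s w"
      using assms(1) w0 that unfolding increasing_on_def M'_def by blast
  qed
  then have "constant_on s M'"
    unfolding constant_on_def by simp
  with M' increasing_on_mono[OF assms(1) M'(1)] show ?thesis
    by (intro exI[of _ M']) simp
qed

lemma exists_homogeneous:
  assumes s: "s \<in> heads" "s \<subseteq> N" and M: "M \<subseteq> N" "infinite M"
  shows "\<exists>M'\<subseteq>M. infinite M' \<and> homogeneous s M'"
proof -
  obtain M1 where M1: "M1 \<subseteq> M" "infinite M1" "increasing_on s M1"
    using exists_increasing[OF s M] by blast
  show ?thesis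
  proof (cases "has_max s M1")
    case False
    with M1 show ?thesis
      unfolding homogeneous_def by (intro exI[of _ M1]) auto
  next
    case True
    then obtain M2 where "M2 \<subseteq> M1" "infinite M2" "increasing_on s M2" "constant_on s M2"
      using increasing_has_max_imp_constant[OF M1(3) _ M1(2)] by blast
    with M1(1) show ?thesis
      unfolding homogeneous_def by (intro exI[of _ M2]) auto
  qed
qed

lemma exists_homogeneous_set:
  "\<exists>N1\<subseteq>N. infinite N1 \<and> (\<forall>s. s \<subseteq> N1 \<longrightarrow> s \<in> heads \<longrightarrow> homogeneous s (tail s N1))"
proof -
  let ?Q = "\<lambda>s M. s \<in> heads \<longrightarrow> s \<subseteq> N \<longrightarrow> homogeneous s M"
  have "\<exists>N1\<subseteq>N. infinite N1 \<and> (\<forall>s. finite s \<longrightarrow> s \<subseteq> N1 \<longrightarrow> ?Q s (tail s N1))"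
  proof (rule fusion[OF N_infinite, where Q = ?Q])
    show "?Q s M'" if "M \<subseteq> N" "?Q s M" "M' \<subseteq> M" "infinite M'" for s M M'
    proof (intro impI)
      assume "s \<in> heads" "s \<subseteq> N"
      moreover have "M \<subseteq> \<Union>B"
        using that(1) N_subset by blast
      ultimately show "homogeneous s M'"
        using homogeneous_mono that(2-4) by blast
    qed
    show "\<exists>M'\<subseteq>M. infinite M' \<and> ?Q s M'" if M: "M \<subseteq> N" "infinite M" for s M
    proof (cases "s \<in> heads \<and> s \<subseteq> N")
      case True
      then obtain M' where "M' \<subseteq> M" "infinite M'" "homogeneous s M'"
        using exists_homogeneous[OF _ _ M] by blast
      then show ?thesis
        by (intro exI[of _ M']) simp
    qed (use M in \<open>intro exI[of _ M], auto\<close>)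
  qed
  then obtain N1 where N1: "N1 \<subseteq> N" "infinite N1"
    "\<forall>s. finite s \<longrightarrow> s \<subseteq> N1 \<longrightarrow> ?Q s (tail s N1)"
    by blast
  have "homogeneous s (tail s N1)" if "s \<subseteq> N1" "s \<in> heads" for s
    using N1 heads_finite[OF that(2)] that by blast
  with N1(1,2) show ?thesis
    by (intro exI[of _ N1]) simp
qed

end

locale bad_node_homogeneous = bad_node +
  fixes N1 :: "nat set"
  assumes N1_subset: "N1 \<subseteq> N" and N1_infinite: "infinite N1"
    and homogeneous_N1: "\<And>s. s \<subseteq> N1 \<Longrightarrow> s \<in> heads \<Longrightarrow> homogeneous s (tail s N1)"
begin

definition generated_ideal :: "nat set \<Rightarrow> 'a set" where
  "generated_ideal s = {x \<in> P. \<exists>w\<in>succ_blocks s. w \<subseteq> tail s N1 \<and> x \<le> succ_val s w}"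

lemma succ_val_in_generated_ideal:
  assumes "s \<in> heads" "s \<subseteq> N1" "w \<in> succ_blocks s" "w \<subseteq> tail s N1"
  shows "succ_val s w \<in> generated_ideal s"
proof -
  have "s \<subseteq> N" "w \<subseteq> N"
    using assms(2,4) N1_subset tail_subset by blast+
  then have "succ_val s w \<in> P"
    using head_not_le_succ_val(3)[OF assms(1) _ assms(3)] by blast
  with assms(3,4) show ?thesis
    unfolding generated_ideal_def by blast
qed

lemma generated_ideal_directed:
  assumes s: "s \<in> heads" "s \<subseteq> N1" and "x \<in> generated_ideal s" "y \<in> generated_ideal s"
  shows "\<exists>z\<in>generated_ideal s. x \<le> z \<and> y \<le> z"
proof -
  obtain w1 w2 where w: "w1 \<in> succ_blocks s" "w1 \<subseteq> tail s N1" "x \<le> succ_val s w1"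
    "w2 \<in> succ_blocks s" "w2 \<subseteq> tail s N1" "y \<le> succ_val s w2"
    using assms(3,4) unfolding generated_ideal_def by blast
  have "finite (w1 \<union> w2)" "N1 \<subseteq> \<Union>B"
    using succ_blocks_finite w(1,4) N1_subset N_subset by blast+
  then obtain w3 where w3: "w3 \<in> succ_blocks s" "w3 \<subseteq> tail (s \<union> (w1 \<union> w2)) N1"
    using exists_succ_block[OF s(1) _ N1_infinite] by blast
  then have "w3 \<subseteq> tail s N1" "w3 \<subseteq> tail w1 (tail s N1)" "w3 \<subseteq> tail w2 (tail s N1)"
    by (auto simp: tail_def)
  moreover have "increasing_on s (tail s N1)"
    using homogeneous_N1[OF s(2,1)] by (simp add: homogeneous_def)
  ultimately have "succ_val s w1 \<le> succ_val s w3" "succ_val s w2 \<le> succ_val s w3"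
    using w(1,2,4,5) w3(1) unfolding increasing_on_def by blast+
  then have "x \<le> succ_val s w3" "y \<le> succ_val s w3"
    using w(3,6) by (blast intro: order_trans)+
  moreover have "succ_val s w3 \<in> generated_ideal s"
    using succ_val_in_generated_ideal[OF s w3(1) \<open>w3 \<subseteq> tail s N1\<close>] .
  ultimately show ?thesis
    by blast
qed

lemma ideal_generated_ideal:
  assumes s: "s \<in> heads" "s \<subseteq> N1"
  shows "ideal_of P (generated_ideal s)"
  unfolding ideal_of_def
proof (intro conjI ballI impI)
  show "generated_ideal s \<subseteq> P"
    by (auto simp: generated_ideal_def)
  have "N1 \<subseteq> \<Union>B"
    using N1_subset N_subset by blast
  then obtain w where "w \<in> succ_blocks s" "w \<subseteq> tail (s \<union> {}) N1"
    using exists_succ_block[OF s(1) _ N1_infinite] by blast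
  then have "succ_val s w \<in> generated_ideal s"
    using succ_val_in_generated_ideal[OF s] by simp
  then show "generated_ideal s \<noteq> {}"
    by blast
  show "y \<in> generated_ideal s" if xy: "x \<in> generated_ideal s" "y \<in> P" "y \<le> x" for x y
  proof -
    obtain w where "w \<in> succ_blocks s" "w \<subseteq> tail s N1" "x \<le> succ_val s w"
      using xy(1) unfolding generated_ideal_def by blast
    moreover from this have "y \<le> succ_val s w"
      using xy(3) by (blast intro: order_trans)
    ultimately show ?thesis
      using xy(2) unfolding generated_ideal_def by blast
  qed
  show "\<exists>z\<in>generated_ideal s. x \<le> z \<and> y \<le> z"
    if "x \<in> generated_ideal s" "y \<in> generated_ideal s" for x y
    using generated_ideal_directed[OF s that] .
qed

lemma head_value_not_in_generated_ideal:
  assumes "s \<in> heads" "s \<subseteq> N1"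
  shows "h (u \<union> s) \<notin> generated_ideal s"
proof
  assume "h (u \<union> s) \<in> generated_ideal s"
  then obtain w where w: "w \<in> succ_blocks s" "w \<subseteq> tail s N1" "h (u \<union> s) \<le> succ_val s w"
    unfolding generated_ideal_def by blast
  have "s \<subseteq> N" "w \<subseteq> N"
    using assms(2) w(2) N1_subset tail_subset by blast+
  with head_not_le_succ_val(1)[OF assms(1) _ w(1)] w(3) show False
    by blast
qed

lemma shift_value_in_generated_ideal:
  assumes "X \<subseteq> N1" "infinite X"
  shows "h (barrier_seg B (u \<union> shift X)) \<in> generated_ideal (head X)"
proof -
  have X: "X \<subseteq> N" "infinite X"
    using assms N1_subset by blast+
  obtain w where w: "w \<in> succ_blocks (head X)" "w \<subseteq> tail (head X) X"
    and eq: "h (barrier_seg B (u \<union> shift X)) = succ_val (head X) w"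
    using shift_value_succ_val[OF X] by blast
  have "head X \<subseteq> N1" "w \<subseteq> tail (head X) N1"
    using init_seg_subset[OF head(2)[OF X]] w(2) assms(1) tail_mono by blast+
  then show ?thesis
    using succ_val_in_generated_ideal[OF head(1)[OF X]] w(1) eq by simp
qed

lemma principal_imp_constant_on:
  assumes s: "s \<in> heads" "s \<subseteq> N1" and "principal_ideal (generated_ideal s)"
  shows "constant_on s (tail s N1)"
proof -
  obtain m where m: "m \<in> generated_ideal s" "\<forall>x\<in>generated_ideal s. x \<le> m"
    using assms(3) unfolding principal_ideal_def by blast
  then obtain w0 where w0: "w0 \<in> succ_blocks s" "w0 \<subseteq> tail s N1" "m \<le> succ_val s w0"
    unfolding generated_ideal_def by blast
  have "succ_val s w \<le> succ_val s w0" if "w \<in> succ_blocks s" "w \<subseteq> tail s N1" for w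
    using succ_val_in_generated_ideal[OF s that] m(2) w0(3) order_trans by blast
  with w0 have "has_max s (tail s N1)"
    unfolding has_max_def by blast
  then show ?thesis
    using homogeneous_N1[OF s(2,1)] by (simp add: homogeneous_def)
qed

lemma nonprincipal_heads_impossible:
  assumes N2: "N2 \<subseteq> N1" "infinite N2"
    and nonprincipal: "\<And>X. X \<subseteq> N2 \<Longrightarrow> infinite X \<Longrightarrow> \<not> principal_ideal (generated_ideal (head X))"
  shows False
proof -
  define X where "X k = (shift ^^ k) N2" for k
  have X_Suc: "X (Suc k) = shift (X k)" for k
    by (simp add: X_def)
  have X: "X k \<subseteq> N2" "infinite (X k)" for k
    by (induction k) (use N2 shift_subset infinite_shift in \<open>auto simp: X_def\<close>)
  then have XN: "X k \<subseteq> N1" "X k \<subseteq> N" for k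
    using N2(1) N1_subset by blast+
  have hX: "head (X k) \<in> heads" "head (X k) \<subseteq> N1" for k
    using head[OF XN(2) X(2)] init_seg_subset XN(1) by blast+
  define I where "I k = generated_ideal (head (X k))" for k
  have I: "ideal_of P (I k)" "I k \<in> nonprincipal_ideals P" for k
    using ideal_generated_ideal[OF hX] nonprincipal[OF X]
    by (simp_all add: I_def nonprincipal_ideals_def)
  have "I (Suc k) \<subset> I k" for k
  proof -
    have "h (barrier_seg B (u \<union> X (Suc k))) \<in> I k"
      using shift_value_in_generated_ideal[OF XN(1) X(2)] by (simp add: I_def X_Suc)
    moreover have "h (barrier_seg B (u \<union> X (Suc k))) \<notin> I (Suc k)"
      using head_value_not_in_generated_ideal[OF hX] head(3)[OF XN(2) X(2)] by (simp add: I_def)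
    moreover have "I k \<subseteq> I (Suc k) \<or> I (Suc k) \<subseteq> I k"
      using chain I(2) unfolding is_chain_incl_def by blast
    ultimately show ?thesis
      by blast
  qed
  with wqo_on_no_strictly_decreasing_ideals[OF wqo I(1)] show False
    by blast
qed

lemma principal_heads_determine_shift:
  assumes N2: "N2 \<subseteq> N1" "infinite N2"
    and principal: "\<And>X. X \<subseteq> N2 \<Longrightarrow> infinite X \<Longrightarrow> principal_ideal (generated_ideal (head X))"
    and X: "X \<subseteq> N2" "infinite X"
  shows "h (barrier_seg B (u \<union> shift X)) =
    h (barrier_seg B (u \<union> shift (head X \<union> tail (head X) N2)))"
proof -
  define s where "s = head X"
  have XN: "X \<subseteq> N"
    using X(1) N2(1) N1_subset by blast
  note hX = head[OF XN X(2), folded s_def]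
  have "s \<subseteq> N1"
    using init_seg_subset[OF hX(2)] X(1) N2(1) by blast
  have const: "constant_on s (tail s N1)"
    using principal_imp_constant_on[OF hX(1) \<open>s \<subseteq> N1\<close>] principal[OF X] by (simp add: s_def)
  define X0 where "X0 = s \<union> tail s N2"
  have "X0 \<subseteq> N2" "infinite X0"
    using init_seg_subset[OF hX(2)] X(1) tail_subset infinite_tail[OF N2(2) heads_finite[OF hX(1)]]
    by (auto simp: X0_def)
  then have X0N: "X0 \<subseteq> N" "infinite X0"
    using N2(1) N1_subset by blast+
  have "init_seg s X0"
    unfolding X0_def by (rule init_seg_Un) (simp add: tail_def)
  then have "head X0 = s"
    using head_eq[OF X0N hX(1)] by simp
  obtain w where w: "w \<in> succ_blocks s" "w \<subseteq> tail s X"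
    "h (barrier_seg B (u \<union> shift X)) = succ_val s w"
    using shift_value_succ_val[OF XN X(2)] unfolding s_def by blast
  obtain w0 where w0: "w0 \<in> succ_blocks s" "w0 \<subseteq> tail s X0"
    "h (barrier_seg B (u \<union> shift X0)) = succ_val s w0"
    using shift_value_succ_val[OF X0N] unfolding \<open>head X0 = s\<close> by blast
  have "X \<subseteq> N1" "X0 \<subseteq> N1"
    using X(1) \<open>X0 \<subseteq> N2\<close> N2(1) by blast+
  then have "w \<subseteq> tail s N1" "w0 \<subseteq> tail s N1"
    using w(2) w0(2) tail_mono[of X N1 s] tail_mono[of X0 N1 s] by blast+
  with const w(1) w0(1) have "succ_val s w = succ_val s w0"
    unfolding constant_on_def by blast
  with w(3) w0(3) show ?thesis
    by (simp add: X0_def s_def)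
qed

lemma principal_heads_extension:
  assumes N2: "N2 \<subseteq> N1" "infinite N2"
    and principal: "\<And>X. X \<subseteq> N2 \<Longrightarrow> infinite X \<Longrightarrow> principal_ideal (generated_ideal (head X))"
  shows "\<exists>u' N' h'. (u', u) \<in> prefix_extension B \<and> bad_at B P h' u' N'"
proof (rule extension_if_head_determines_shift
    [where p = "\<lambda>s. h (barrier_seg B (u \<union> shift (s \<union> tail s N2)))"])
  show "N2 \<subseteq> N" "infinite N2"
    using N2 N1_subset by blast+
  show "h (barrier_seg B (u \<union> shift X)) = h (barrier_seg B (u \<union> shift (head X \<union> tail (head X) N2)))"
    if "X \<subseteq> N2" "infinite X" for X
    using principal_heads_determine_shift[OF N2 principal that] .
qed

lemma extension_exists:
  "\<exists>u' N' h'. (u', u) \<in> prefix_extension B \<and> bad_at B P h' u' N'"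
proof -
  define F where "F = {s \<in> heads. \<not> principal_ideal (generated_ideal s)}"
  have "\<forall>t\<in>F. finite t"
    using heads_finite by (simp add: F_def)
  from nash_williams[OF N1_infinite this] obtain N2
    where "N2 \<subseteq> N1 \<and> infinite N2 \<and> ((\<forall>t\<in>F. \<not> t \<subseteq> N2) \<or> front_on F N2)" ..
  then have N2: "N2 \<subseteq> N1" "infinite N2" and alt: "(\<forall>t\<in>F. \<not> t \<subseteq> N2) \<or> front_on F N2"
    by simp_all
  have head_N2: "head X \<in> heads" "init_seg (head X) X" if "X \<subseteq> N2" "infinite X" for X
    using head[of X] that N2(1) N1_subset by blast+
  show ?thesis
  proof (cases "\<forall>t\<in>F. \<not> t \<subseteq> N2")
    case True
    have principal: "principal_ideal (generated_ideal (head X))" if "X \<subseteq> N2" "infinite X" for X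
      using True head_N2[OF that] init_seg_subset that(1) unfolding F_def by blast
    show ?thesis
      using principal_heads_extension[OF N2 principal] .
  next
    case False
    with alt have "front_on F N2"
      by blast
    have "\<not> principal_ideal (generated_ideal (head X))" if X: "X \<subseteq> N2" "infinite X" for X
    proof -
      obtain t where "t \<in> F" "init_seg t X"
        using \<open>front_on F N2\<close> X unfolding front_on_def by blast
      moreover have "X \<subseteq> N"
        using X(1) N2(1) N1_subset by blast
      ultimately have "head X = t"
        using head_eq[OF _ X(2)] unfolding F_def by blast
      with \<open>t \<in> F\<close> show ?thesis
        unfolding F_def by blast
    qed
    with nonprincipal_heads_impossible[OF N2] show ?thesis
      by blast
  qed
qed

end

lemma (in bad_node) extension_exists:
  "\<exists>u' N' h'. (u', u) \<in> prefix_extension B \<and> bad_at B P h' u' N'"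
proof -
  obtain N1 where "N1 \<subseteq> N" "infinite N1"
    "\<forall>s. s \<subseteq> N1 \<longrightarrow> s \<in> heads \<longrightarrow> homogeneous s (tail s N1)"
    using exists_homogeneous_set by blast
  then interpret bad_node_homogeneous B P u N h N1
    by unfold_locales blast+
  show ?thesis
    by (rule extension_exists)
qed

lemma (in nat_barrier) not_bad_at_prefix:
  assumes wqo: "wqo_on P" and chain: "is_chain_incl (nonprincipal_ideals P)"
  shows "barrier_prefix B u \<Longrightarrow> \<not> bad_at B P h u N"
proof (induction u arbitrary: h N rule: wf_induct[OF wf_prefix_extension])
  case (1 u)
  show ?case
  proof
    assume bad: "bad_at B P h u N"
    show False
    proof (cases "u \<in> B")
      case True
      with bad show False
        using not_bad_at_member by blast
    next
      case False
      interpret bad_node B P u N h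
        using wqo chain 1(2) False bad by unfold_locales
      obtain u' N' h' where "(u', u) \<in> prefix_extension B" "bad_at B P h' u' N'"
        using extension_exists by blast
      with 1(1) show False
        unfolding prefix_extension_def by blast
    qed
  qed
qed

theorem corollary1p5:
  fixes P :: "'a::order set"
  assumes "wqo_on P"
    and "is_chain_incl (nonprincipal_ideals P)"
  shows "bqo_on P"
  unfolding bqo_on_def
proof (intro allI impI)
  fix B :: "nat set set" and f :: "nat set \<Rightarrow> 'a"
  assume "barrier B \<and> f ` B \<subseteq> P"
  then interpret nat_barrier B
    by unfold_locales blast
  show "good_map B f"
  proof (rule ccontr)
    assume "\<not> good_map B f"
    then have "bad_at B P f {} (\<Union>B)"
      using bad_at_empty_if_not_good \<open>barrier B \<and> f ` B \<subseteq> P\<close> by blast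
    moreover have "barrier_prefix B {}"
      by (rule barrier_prefix_empty)
    ultimately show False
      using not_bad_at_prefix[OF assms] by blast
  qed
qed

end
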